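(* Let $\mathcal{Q}$ be a nonempty convex delta-matroid on a finite set $E$. Let $r=\max\{|S|:S\in\mathcal{Q}\}$, $s=\min\{|S|:S\in\mathcal{Q}\}$, $\ell=r-s$, let $\{1,\dots,\ell\}$ be $\ell$ new elements disjoint from $E$, $E^\flat=E\cup\{1,\dots,\ell\}$, and $\mathcal{Q}^\flat=\{S\subseteq E^\flat: |S|=r \text{ and } S\cap E\in\mathcal{Q}\}$. Then $\mathcal{Q}^\flat$ is the set of bases of a matroid on $E^\flat$.
   Context: $\mathcal{Q}\subseteq 2^E$ is convex if $S\subseteq T\subseteq S'$ with $S,S'\in\mathcal{Q}$ implies $T\in\mathcal{Q}$. $\mathcal{Q}$ is a delta-matroid if for all $A,B\in\mathcal{Q}$ and $e\in A\triangle B$ there is $f\in A\triangle B$ (possibly $f=e$) with $A\triangle\{e,f\}\in\mathcal{Q}$, where $\triangle$ is symmetric difference. *)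

theory Defs
  imports Main
begin

definition convex_family :: "'a set set \<Rightarrow> bool" where
  "convex_family Q \<longleftrightarrow>
     (\<forall>S T S'. S \<in> Q \<and> S' \<in> Q \<and> S \<subseteq> T \<and> T \<subseteq> S' \<longrightarrow> T \<in> Q)"

definition delta_matroid :: "'a set \<Rightarrow> 'a set set \<Rightarrow> bool" where
  "delta_matroid E Q \<longleftrightarrow> Q \<subseteq> Pow E \<and>
     (\<forall>A\<in>Q. \<forall>B\<in>Q. \<forall>e\<in>(A - B) \<union> (B - A).
        \<exists>f\<in>(A - B) \<union> (B - A). (A - {e,f}) \<union> ({e,f} - A) \<in> Q)"

definition matroid_bases :: "'a set \<Rightarrow> 'a set set \<Rightarrow> bool" where
  "matroid_bases E \<B> \<longleftrightarrow> finite E \<and> \<B> \<noteq> {} \<and> \<B> \<subseteq> Pow E \<and>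
     (\<forall>B1\<in>\<B>. \<forall>B2\<in>\<B>. \<forall>x\<in>B1 - B2. \<exists>y\<in>B2 - B1. insert y (B1 - {x}) \<in> \<B>)"

end

theory Submission
  imports Defs
begin

text \<open>Members of a convex delta-matroid satisfy the augmentation axiom of independent sets: if
  \<open>|A| < |B|\<close> then \<open>A + y \<in> Q\<close> for some \<open>y \<in> B - A\<close>. Indeed, applying the exchange axiom to
  \<open>B\<close>, \<open>A\<close> and some \<open>g \<in> A - B\<close>, convexity discards a second step in the same direction, so
  \<open>B\<close> can be moved towards \<open>A\<close> without shrinking it, and induction on \<open>|A - B|\<close> applies.
  A member of \<open>Q\<^sup>\<flat>\<close> is a member of \<open>Q\<close> padded by new elements up to size \<open>r\<close>. To exchange
  \<open>x \<in> S\<^sub>1 - S\<^sub>2\<close>: a padding element \<open>x\<close> is swapped for a padding element of \<open>S\<^sub>2\<close> or, if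
  there is none, \<open>S\<^sub>1 \<inter> E\<close> is smaller than \<open>S\<^sub>2 \<inter> E\<close> and augmentation supplies the new
  element. For \<open>x \<in> E\<close>, exchange plus convexity either swaps \<open>x\<close> within \<open>E\<close> or allows deleting
  it, and a deletion is compensated by a padding element of \<open>S\<^sub>2\<close> or again by augmentation.\<close>

lemma Plus_vimage_Inl_Inr: "Inl -` B <+> Inr -` B = B"
  by (auto simp: Plus_def) (metis rangeI sum.exhaust)

lemma card_eq_card_vimage_Inl_plus_Inr:
  assumes "finite B"
  shows "card B = card (Inl -` B) + card (Inr -` B)"
  by (metis Plus_vimage_Inl_Inr assms card_Plus finite_vimageI inj_Inl inj_Inr)

lemma card_vimage_Inl_add_card_Inr_diff:
  fixes B1 B2 :: "('a + 'b) set"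
  assumes "finite B1" "finite B2" "card B1 = card B2" "Inr -` B2 \<subseteq> Inr -` B1"
  shows "card (Inl -` B1) + card (Inr -` B1 - Inr -` B2) = card (Inl -` B2)"
  using card_eq_card_vimage_Inl_plus_Inr[OF assms(1)] card_eq_card_vimage_Inl_plus_Inr[OF assms(2)]
    card_Diff_subset[OF finite_vimageI[OF assms(2)] assms(4)]
    card_mono[OF finite_vimageI[OF assms(1)] assms(4)] assms(3)
  by (simp add: inj_Inr)

lemma convex_familyD:
  "convex_family Q \<Longrightarrow> S \<in> Q \<Longrightarrow> S' \<in> Q \<Longrightarrow> S \<subseteq> T \<Longrightarrow> T \<subseteq> S' \<Longrightarrow> T \<in> Q"
  unfolding convex_family_def by blast

lemma delta_matroidD:
  assumes "delta_matroid E Q" "A \<in> Q" "B \<in> Q" "e \<in> (A - B) \<union> (B - A)"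
  obtains f where "f \<in> (A - B) \<union> (B - A)" "(A - {e, f}) \<union> ({e, f} - A) \<in> Q"
  using assms unfolding delta_matroid_def by blast

lemma convex_delta_matroid_delete_or_exchange:
  assumes "convex_family Q" "delta_matroid E Q" "A \<in> Q" "B \<in> Q" "a \<in> A - B"
  shows "A - {a} \<in> Q \<or> (\<exists>f\<in>B - A. insert f (A - {a}) \<in> Q)"
proof -
  obtain f where f: "f \<in> (A - B) \<union> (B - A)" and fQ: "(A - {a, f}) \<union> ({a, f} - A) \<in> Q"
    using delta_matroidD[OF assms(2-4), of a] assms(5) by blast
  show ?thesis
  proof (cases "f \<in> A")
    case True
    then have "A - {a, f} \<in> Q" using fQ assms(5) by (simp add: insert_Diff_if)
    then have "A - {a} \<in> Q" by (rule convex_familyD[OF assms(1) _ assms(3)]) auto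
    then show ?thesis ..
  next
    case False
    then have "(A - {a, f}) \<union> ({a, f} - A) = insert f (A - {a})" using assms(5) by auto
    with fQ have "insert f (A - {a}) \<in> Q" by simp
    then show ?thesis using f False by blast
  qed
qed

lemma convex_delta_matroid_insert_or_exchange:
  assumes "convex_family Q" "delta_matroid E Q" "A \<in> Q" "B \<in> Q" "b \<in> B - A"
  shows "insert b A \<in> Q \<or> (\<exists>f\<in>A - B. insert b (A - {f}) \<in> Q)"
proof -
  obtain f where f: "f \<in> (A - B) \<union> (B - A)" and fQ: "(A - {b, f}) \<union> ({b, f} - A) \<in> Q"
    using delta_matroidD[OF assms(2-4), of b] assms(5) by blast
  show ?thesis
  proof (cases "f \<in> A")
    case True
    then have "insert b (A - {f}) \<in> Q" using fQ assms(5) by (simp add: insert_Diff_if)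
    then show ?thesis using f True by blast
  next
    case False
    then have "insert b (insert f A) \<in> Q" using fQ assms(5) by (simp add: insert_Diff_if)
    then have "insert b A \<in> Q" by (rule convex_familyD[OF assms(1) assms(3)]) auto
    then show ?thesis ..
  qed
qed

locale convex_delta_matroid =
  fixes E :: "'a set" and Q :: "'a set set"
  assumes finite_ground: "finite E"
    and convex: "convex_family Q"
    and delta_matroid: "delta_matroid E Q"
begin

lemma finite_member: "A \<in> Q \<Longrightarrow> finite A"
  using delta_matroid finite_ground unfolding delta_matroid_def by (auto intro: finite_subset)

lemma augment: "A \<in> Q \<Longrightarrow> B \<in> Q \<Longrightarrow> card A < card B \<Longrightarrow> \<exists>y\<in>B - A. insert y A \<in> Q"
proof (induction "card (A - B)" arbitrary: B rule: less_induct)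
  case less
  have fin: "finite A" "finite B" using less.prems(1,2) by (auto intro: finite_member)
  show ?case
  proof (cases "A \<subseteq> B")
    case True
    have "\<not> B \<subseteq> A" using less.prems(3) card_mono[OF fin(1)] by (meson leD)
    then obtain y where y: "y \<in> B - A" by blast
    have "insert y A \<in> Q" by (rule convex_familyD[OF convex less.prems(1,2)]) (use True y in auto)
    with y show ?thesis ..
  next
    case False
    then obtain g where g: "g \<in> A - B" by blast
    obtain B' where B': "B' \<in> Q" "B' - A \<subseteq> B - A" "card B \<le> card B'" "A - B' = A - B - {g}"
    proof (cases "insert g B \<in> Q")
      case True
      show ?thesis
        by (rule that[of "insert g B"]) (use True g fin(2) in \<open>auto simp: card_insert_le\<close>)
    next
      case False
      then obtain f where f: "f \<in> B - A" "insert g (B - {f}) \<in> Q"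
        using convex_delta_matroid_insert_or_exchange[OF convex delta_matroid less.prems(2,1) g]
        by blast
      have "card (insert g (B - {f})) = card B"
        using f(1) g fin(2) card_Suc_Diff1[of B f] by simp
      then show ?thesis
        by (intro that[of "insert g (B - {f})"]) (use f g in auto)
    qed
    have "card (A - B') < card (A - B)"
      unfolding B'(4) using g fin(1) by (intro card_Diff1_less) auto
    moreover have "card A < card B'" using less.prems(3) B'(3) by linarith
    ultimately obtain y where "y \<in> B' - A" "insert y A \<in> Q"
      using less.hyps less.prems(1) B'(1) by blast
    with B'(2) show ?thesis by blast
  qed
qed

lemma padded_exchange_Inr:
  fixes B1 B2 :: "('a + 'b) set"
  assumes "finite B1" "finite B2" "card B1 = card B2"
    and "Inl -` B1 \<in> Q" "Inl -` B2 \<in> Q" "Inr n \<in> B1 - B2"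
  shows "\<exists>y\<in>B2 - B1. Inl -` insert y (B1 - {Inr n}) \<in> Q"
proof (cases "\<exists>m. Inr m \<in> B2 - B1")
  case True
  then obtain m where m: "Inr m \<in> B2 - B1" by blast
  have "Inl -` insert (Inr m) (B1 - {Inr n}) = Inl -` B1" by auto
  with m assms(4) show ?thesis by metis
next
  case False
  then have "Inr -` B2 \<subseteq> Inr -` B1" by auto
  moreover have "n \<in> Inr -` B1 - Inr -` B2" using assms(6) by simp
  moreover have "finite (Inr -` B1 - Inr -` B2)" using assms(1) by (simp add: finite_vimageI)
  ultimately have "card (Inl -` B1) < card (Inl -` B2)"
    using card_vimage_Inl_add_card_Inr_diff[OF assms(1-3)]
    by (metis card_gt_0_iff empty_iff less_add_same_cancel1)
  then obtain a where a: "a \<in> Inl -` B2 - Inl -` B1" "insert a (Inl -` B1) \<in> Q"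
    using augment assms(4,5) by blast
  have "Inl a \<in> B2 - B1" using a(1) by simp
  moreover have "Inl -` insert (Inl a) (B1 - {Inr n}) = insert a (Inl -` B1)" by auto
  ultimately show ?thesis using a(2) by metis
qed

lemma padded_exchange_Inl:
  fixes B1 B2 :: "('a + 'b) set"
  assumes "finite B1" "finite B2" "card B1 = card B2"
    and "Inl -` B1 \<in> Q" "Inl -` B2 \<in> Q" "Inl a \<in> B1 - B2"
  shows "\<exists>y\<in>B2 - B1. Inl -` insert y (B1 - {Inl a}) \<in> Q"
proof -
  define A1 A2 where "A1 = Inl -` B1" and "A2 = Inl -` B2"
  have A: "A1 \<in> Q" "A2 \<in> Q" and a: "a \<in> A1 - A2"
    using assms(4-6) unfolding A1_def A2_def by auto
  have "(\<exists>f\<in>A2 - A1. insert f (A1 - {a}) \<in> Q) \<or> (\<exists>m. Inr m \<in> B2 - B1) \<and> A1 - {a} \<in> Q"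
  proof (cases "\<exists>m. Inr m \<in> B2 - B1")
    case True
    then show ?thesis
      using convex_delta_matroid_delete_or_exchange[OF convex delta_matroid A a] by blast
  next
    case False
    then have "card A1 \<le> card A2"
      using card_vimage_Inl_add_card_Inr_diff[OF assms(1-3)] unfolding A1_def A2_def
      by fastforce
    moreover have "card (A1 - {a}) < card A1"
      using a finite_member[OF A(1)] by (intro card_Diff1_less) auto
    ultimately have "card (A1 - {a}) < card A2" by linarith
    then show ?thesis
      using convex_delta_matroid_delete_or_exchange[OF convex delta_matroid A a]
        augment[OF _ A(2)] a by fastforce
  qed
  then show ?thesis
  proof
    assume "\<exists>f\<in>A2 - A1. insert f (A1 - {a}) \<in> Q"
    then obtain f where f: "f \<in> A2 - A1" "insert f (A1 - {a}) \<in> Q" by blast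
    have "Inl f \<in> B2 - B1" using f(1) unfolding A1_def A2_def by simp
    moreover have "Inl -` insert (Inl f) (B1 - {Inl a}) = insert f (A1 - {a})"
      unfolding A1_def by auto
    ultimately show ?thesis using f(2) by metis
  next
    assume "(\<exists>m. Inr m \<in> B2 - B1) \<and> A1 - {a} \<in> Q"
    then obtain m where m: "Inr m \<in> B2 - B1" "A1 - {a} \<in> Q" by blast
    have "Inl -` insert (Inr m) (B1 - {Inl a}) = A1 - {a}" unfolding A1_def by auto
    with m show ?thesis by metis
  qed
qed

lemma padded_exchange:
  fixes B1 B2 :: "('a + 'b) set"
  assumes "finite B1" "finite B2" "card B1 = card B2"
    and "Inl -` B1 \<in> Q" "Inl -` B2 \<in> Q" "x \<in> B1 - B2"
  shows "\<exists>y\<in>B2 - B1. Inl -` insert y (B1 - {x}) \<in> Q"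
  using assms(6) padded_exchange_Inl[OF assms(1-5)] padded_exchange_Inr[OF assms(1-5)]
  by (cases x) blast+

end

theorem theorem4p12:
  fixes E :: "'a set" and Q :: "'a set set"
  assumes "finite E" and "Q \<noteq> {}" and "convex_family Q" and "delta_matroid E Q"
  defines "r \<equiv> Max (card ` Q)" and "s \<equiv> Min (card ` Q)"
  defines "Eflat \<equiv> Inl ` E \<union> Inr ` {1..r - s}"
  defines "Qflat \<equiv> {S. S \<subseteq> Eflat \<and> card S = r \<and> Inl -` S \<in> Q}"
  shows "matroid_bases Eflat Qflat"
proof -
  interpret convex_delta_matroid E Q using assms(1,3,4) by unfold_locales
  have Q_Pow: "Q \<subseteq> Pow E" using assms(4) unfolding delta_matroid_def by blast
  have fin_cards: "finite (card ` Q)"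
    using Q_Pow assms(1) by (meson finite_Pow_iff finite_subset finite_imageI)
  have fin_Eflat: "finite Eflat" unfolding Eflat_def using assms(1) by simp
  have "s \<in> card ` Q" using Min_in[OF fin_cards] assms(2) unfolding s_def by simp
  then obtain A0 where A0: "A0 \<in> Q" "card A0 = s" by blast
  have "s \<le> r" using Max_ge[OF fin_cards] A0 unfolding r_def by auto
  have "A0 <+> {1..r - s} \<subseteq> Eflat" using A0(1) Q_Pow unfolding Eflat_def by auto
  moreover have "card (A0 <+> {1..r - s}) = r"
    using finite_member[OF A0(1)] A0(2) \<open>s \<le> r\<close> by (simp add: card_Plus)
  moreover have "Inl -` (A0 <+> {1..r - s}) = A0" by auto
  ultimately have "A0 <+> {1..r - s} \<in> Qflat" using A0(1) unfolding Qflat_def by simp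
  moreover have "\<exists>y\<in>B2 - B1. insert y (B1 - {x}) \<in> Qflat"
    if B: "B1 \<in> Qflat" "B2 \<in> Qflat" and x: "x \<in> B1 - B2" for B1 B2 x
  proof -
    have fin_B: "finite B1" "finite B2"
      using B fin_Eflat unfolding Qflat_def by (auto intro: finite_subset)
    obtain y where y: "y \<in> B2 - B1" "Inl -` insert y (B1 - {x}) \<in> Q"
      using padded_exchange[OF fin_B, of x] B x
      unfolding Qflat_def by auto
    have "card (insert y (B1 - {x})) = card B1"
      using y(1) x fin_B(1) card_Suc_Diff1[of B1 x] by simp
    with y B show ?thesis unfolding Qflat_def by blast
  qed
  ultimately show ?thesis
    unfolding matroid_bases_def using fin_Eflat unfolding Qflat_def by blast
qed

end
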